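(* Let $\mathbb{L}/\mathbb{K}$ be a finite Galois extension of degree $N$ whose Galois group $G$ is abelian, let $\mathcal{C}\subseteq\mathbb{L}[G]$ be an $\mathbb{L}$-linear subspace, and let $\mathcal{B}$ be an ordered $\mathbb{K}$-basis of $\mathbb{L}$ with trace-dual basis $\mathcal{B}^*$. Then $\mathcal{C}^\perp(\mathcal{B})=\big(\mathcal{C}(\mathcal{B}^* )\big)^\perp$, where on the left $\perp$ is taken in $\mathbb{L}[G]$ with respect to $\langle\cdot,\cdot\rangle_{\mathbb{L}[G]}$ and on the right in $\mathbb{L}^N$ with respect to the standard inner product $\mathbf{u}\cdot\mathbf{v}^\top$.
   Context: Elements $a=\sum_g a_g g\in\mathbb{L}[G]$ act on $\mathbb{L}$ by $x\mapsto\sum_g a_gg(x)$. For $\mathbf{b}=(b_1,\dots,b_N)\in\mathbb{L}^N$, $\mathrm{ev}_\mathbf{b}(a)=(a(b_1),\dots,a(b_N))$, and for $\mathcal{C}\subseteq\mathbb{L}[G]$, $\mathcal{C}(\mathbf{b})=\{\mathrm{ev}_\mathbf{b}(c):c\in\mathcal{C}\}$. The bilinear form on $\mathbb{L}[G]$ is $\langle\sum_ga_gg,\sum_gb_gg\rangle_{\mathbb{L}[G]}=\sum_g a_gb_g$, and $\mathcal{C}^\perp=\{a\in\mathbb{L}[G]:\langle a,b\rangle_{\mathbb{L}[G]}=0\ \forall b\in\mathcal{C}\}$. The trace-dual basis $\mathcal{B}^*=(b_1^*,\dots,b_N^* )$ satisfies $\mathrm{Tr}_{\mathbb{L}/\mathbb{K}}(b_ib_j^*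 )=\delta_{i,j}$ with $\mathrm{Tr}_{\mathbb{L}/\mathbb{K}}(x)=\sum_{g\in G}g(x)$. *)

theory Defs
  imports Main
begin

(* K is a subfield of the field 'a (playing the role of L) *)
definition is_subfield :: "'a::field set \<Rightarrow> bool" where
  "is_subfield K \<longleftrightarrow> 0 \<in> K \<and> 1 \<in> K \<and>
     (\<forall>x\<in>K. \<forall>y\<in>K. x + y \<in> K \<and> x * y \<in> K) \<and>
     (\<forall>x\<in>K. - x \<in> K \<and> inverse x \<in> K)"

definition field_aut :: "('a::field \<Rightarrow> 'a) \<Rightarrow> bool" where
  "field_aut \<sigma> \<longleftrightarrow> bij \<sigma> \<and> \<sigma> 1 = 1 \<and>
     (\<forall>x y. \<sigma> (x + y) = \<sigma> x + \<sigma> y \<and> \<sigma> (x * y) = \<sigma> x * \<sigma> y)"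

definition Gal :: "'a::field set \<Rightarrow> ('a \<Rightarrow> 'a) set" where
  "Gal K = {\<sigma>. field_aut \<sigma> \<and> (\<forall>x\<in>K. \<sigma> x = x)}"

definition finite_galois :: "'a::field set \<Rightarrow> bool" where
  "finite_galois K \<longleftrightarrow> is_subfield K \<and> finite (Gal K) \<and>
     {x. \<forall>\<sigma>\<in>Gal K. \<sigma> x = x} = K"

definition abelian_gal :: "'a::field set \<Rightarrow> bool" where
  "abelian_gal K \<longleftrightarrow> (\<forall>\<sigma>\<in>Gal K. \<forall>\<tau>\<in>Gal K. \<sigma> \<circ> \<tau> = \<tau> \<circ> \<sigma>)"

definition trace :: "'a::field set \<Rightarrow> 'a \<Rightarrow> 'a" where
  "trace K x = (\<Sum>\<sigma>\<in>Gal K. \<sigma> x)"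

definition is_K_basis :: "'a::field set \<Rightarrow> nat \<Rightarrow> (nat \<Rightarrow> 'a) \<Rightarrow> bool" where
  "is_K_basis K N b \<longleftrightarrow>
     (\<forall>c. (\<forall>i<N. c i \<in> K) \<longrightarrow> (\<Sum>i<N. c i * b i) = 0 \<longrightarrow> (\<forall>i<N. c i = 0)) \<and>
     (\<forall>x. \<exists>c. (\<forall>i<N. c i \<in> K) \<and> x = (\<Sum>i<N. c i * b i))"

definition trace_dual :: "'a::field set \<Rightarrow> nat \<Rightarrow> (nat \<Rightarrow> 'a) \<Rightarrow> (nat \<Rightarrow> 'a) \<Rightarrow> bool" where
  "trace_dual K N b bd \<longleftrightarrow>
     (\<forall>i<N. \<forall>j<N. trace K (b i * bd j) = (if i = j then 1 else 0))"

(* Group algebra L[G]: functions G \<Rightarrow> L, represented as functions vanishing off G *)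
definition grp_alg :: "('a \<Rightarrow> 'a) set \<Rightarrow> (('a \<Rightarrow> 'a) \<Rightarrow> 'a::field) set" where
  "grp_alg G = {a. \<forall>g. g \<notin> G \<longrightarrow> a g = 0}"

definition ga_subspace :: "('a \<Rightarrow> 'a) set \<Rightarrow> (('a \<Rightarrow> 'a) \<Rightarrow> 'a::field) set \<Rightarrow> bool" where
  "ga_subspace G C \<longleftrightarrow> C \<subseteq> grp_alg G \<and> (\<lambda>_. 0) \<in> C \<and>
     (\<forall>a\<in>C. \<forall>b\<in>C. (\<lambda>g. a g + b g) \<in> C) \<and>
     (\<forall>c. \<forall>a\<in>C. (\<lambda>g. c * a g) \<in> C)"

definition ga_act :: "('a \<Rightarrow> 'a) set \<Rightarrow> (('a \<Rightarrow> 'a) \<Rightarrow> 'a::field) \<Rightarrow> 'a \<Rightarrow> 'a" where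
  "ga_act G a x = (\<Sum>g\<in>G. a g * g x)"

definition ga_form :: "('a \<Rightarrow> 'a) set \<Rightarrow> (('a \<Rightarrow> 'a) \<Rightarrow> 'a::field) \<Rightarrow> (('a \<Rightarrow> 'a) \<Rightarrow> 'a) \<Rightarrow> 'a" where
  "ga_form G a b = (\<Sum>g\<in>G. a g * b g)"

definition ga_perp :: "('a \<Rightarrow> 'a) set \<Rightarrow> (('a \<Rightarrow> 'a) \<Rightarrow> 'a::field) set \<Rightarrow> (('a \<Rightarrow> 'a) \<Rightarrow> 'a) set" where
  "ga_perp G C = {a \<in> grp_alg G. \<forall>b\<in>C. ga_form G a b = 0}"

definition ev :: "('a \<Rightarrow> 'a) set \<Rightarrow> nat \<Rightarrow> (nat \<Rightarrow> 'a) \<Rightarrow> (('a \<Rightarrow> 'a) \<Rightarrow> 'a::field) \<Rightarrow> 'a list" where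
  "ev G N b a = map (\<lambda>i. ga_act G a (b i)) [0..<N]"

definition vec_perp :: "nat \<Rightarrow> 'a::field list set \<Rightarrow> 'a list set" where
  "vec_perp N S = {v. length v = N \<and> (\<forall>u\<in>S. (\<Sum>i<N. v ! i * u ! i) = 0)}"

end

theory Submission
  imports Defs
begin

text \<open>Evaluating at the dual bases turns the pairing of \<open>L^N\<close> into the form on
\<open>L[G]\<close>: by Dedekind's independence of characters, the trace-dual relation
\<open>Tr(b_i b_j^*) = \<delta>_ij\<close> upgrades to \<open>\<Sum>_i g(b_i) h(b_i^*) = \<delta>_gh\<close> for \<open>g, h \<in> G\<close>, so
\<open>ev_B(a) \<cdot> ev_B*(c) = \<langle>a, c\<rangle>\<close>. This gives one inclusion; for the other, every
\<open>v \<in> L^N\<close> is \<open>ev_B(a_v)\<close> for \<open>a_v = \<Sum>_h (\<Sum>_i v_i h(b_i^*)) h\<close>, and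
\<open>\<langle>a_v, c\<rangle> = v \<cdot> ev_B*(c)\<close>.\<close>

lemma Gal_add: "g \<in> Gal K \<Longrightarrow> g (x + y) = g x + g y"
  by (simp add: Gal_def field_aut_def)

lemma Gal_mult: "g \<in> Gal K \<Longrightarrow> g (x * y) = g x * g y"
  by (simp add: Gal_def field_aut_def)

lemma Gal_one: "g \<in> Gal K \<Longrightarrow> g 1 = 1"
  by (simp add: Gal_def field_aut_def)

lemma Gal_bij: "g \<in> Gal K \<Longrightarrow> bij g"
  by (simp add: Gal_def field_aut_def)

lemma Gal_fix: "g \<in> Gal K \<Longrightarrow> x \<in> K \<Longrightarrow> g x = x"
  by (simp add: Gal_def)

lemma Gal_zero: "g \<in> Gal K \<Longrightarrow> g 0 = 0"
  using Gal_add[of g K 0 0] by (metis add.right_neutral add_left_cancel)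

lemma Gal_sum: "g \<in> Gal K \<Longrightarrow> g (sum f A) = (\<Sum>x\<in>A. g (f x))"
  by (induction A rule: infinite_finite_induct) (auto simp: Gal_zero Gal_add)

lemma id_in_Gal: "id \<in> Gal K"
  by (simp add: Gal_def field_aut_def)

lemma Gal_comp: "g \<in> Gal K \<Longrightarrow> h \<in> Gal K \<Longrightarrow> g \<circ> h \<in> Gal K"
  by (auto simp: Gal_def field_aut_def intro: bij_comp)

lemma Gal_inv:
  assumes g: "g \<in> Gal K"
  shows "inv g \<in> Gal K"
proof -
  have "bij g" using Gal_bij[OF g] .
  then have inj: "inj g" and surj: "\<And>x. g (inv g x) = x"
    by (simp_all add: bij_is_inj bij_is_surj surj_f_inv_f)
  have "bij (inv g)" using \<open>bij g\<close> bij_imp_bij_inv by blast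
  moreover have "inv g 1 = 1" using Gal_one[OF g] inj by (metis inv_f_f)
  moreover have "inv g (x + y) = inv g x + inv g y" for x y
    using inj surj Gal_add[OF g, of "inv g x" "inv g y"] by (metis inv_f_f)
  moreover have "inv g (x * y) = inv g x * inv g y" for x y
    using inj surj Gal_mult[OF g, of "inv g x" "inv g y"] by (metis inv_f_f)
  moreover have "inv g x = x" if "x \<in> K" for x
    using Gal_fix[OF g that] inj by (metis inv_f_f)
  ultimately show ?thesis by (simp add: Gal_def field_aut_def)
qed

lemma Gal_linear_independent:
  assumes "finite S" "S \<subseteq> Gal K" "\<And>x. (\<Sum>s\<in>S. c s * s x) = 0"
  shows "\<forall>s\<in>S. c s = 0"
  using assms
proof (induction S arbitrary: c rule: finite_induct)
  case empty
  then show ?case by simp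
next
  case (insert t S)
  have tG: "t \<in> Gal K" and SG: "S \<subseteq> Gal K" using insert.prems by auto
  have rel: "(\<Sum>s\<in>S. c s * s x) = - (c t * t x)" for x
    using insert.prems(2)[of x] insert.hyps by (simp add: eq_neg_iff_add_eq_0 add.commute)
  text \<open>Subtracting \<open>t y\<close> times the relation at \<open>x\<close> from the relation at \<open>y x\<close>
    eliminates \<open>t\<close>, leaving a shorter relation with coefficients \<open>c s (s y - t y)\<close>.\<close>
  have shorter: "\<forall>s\<in>S. c s * (s y - t y) = 0" for y
  proof (rule insert.IH[OF SG])
    fix x
    have "(\<Sum>s\<in>S. c s * (s y - t y) * s x)
        = (\<Sum>s\<in>S. c s * s (y * x)) - t y * (\<Sum>s\<in>S. c s * s x)"
      unfolding sum_distrib_left sum_subtractf[symmetric]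
      by (rule sum.cong) (use SG Gal_mult in \<open>fastforce simp: algebra_simps\<close>)+
    also have "\<dots> = 0"
      unfolding rel Gal_mult[OF tG] by (simp add: algebra_simps)
    finally show "(\<Sum>s\<in>S. c s * (s y - t y) * s x) = 0" .
  qed
  have cS: "\<forall>s\<in>S. c s = 0"
  proof
    fix s assume "s \<in> S"
    moreover obtain y where "s y \<noteq> t y"
      using \<open>s \<in> S\<close> insert.hyps(2) by (metis ext)
    ultimately show "c s = 0" using shorter[of y] by auto
  qed
  then have "c t = 0" using rel[of 1] Gal_one[OF tG] by simp
  with cS show ?case by simp
qed

lemma trace_mult_left:
  "c \<in> K \<Longrightarrow> trace K (c * y) = c * trace K y"
  unfolding trace_def sum_distrib_left by (rule sum.cong) (auto simp: Gal_mult Gal_fix)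

lemma trace_sum: "trace K (sum f A) = (\<Sum>j\<in>A. trace K (f j))"
  unfolding trace_def by (simp add: Gal_sum sum.swap[of _ "Gal K"])

lemma sum_mult_trace_dual:
  assumes "trace_dual K N b bd" and "j < N"
  shows "(\<Sum>i<N. c i * trace K (b i * bd j)) = c j"
    and "(\<Sum>i<N. c i * trace K (b j * bd i)) = c j"
proof -
  have "(\<Sum>i<N. c i * trace K (b i * bd j)) = (\<Sum>i<N. if i = j then c i else 0)"
    by (rule sum.cong) (use assms in \<open>auto simp: trace_dual_def\<close>)
  then show "(\<Sum>i<N. c i * trace K (b i * bd j)) = c j"
    using assms(2) by simp
  have "(\<Sum>i<N. c i * trace K (b j * bd i)) = (\<Sum>i<N. if i = j then c i else 0)"
    by (rule sum.cong) (use assms in \<open>auto simp: trace_dual_def\<close>)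
  then show "(\<Sum>i<N. c i * trace K (b j * bd i)) = c j"
    using assms(2) by simp
qed

lemma trace_dual_expansion:
  assumes "is_K_basis K N b" and "trace_dual K N b bd"
  shows "x = (\<Sum>i<N. trace K (x * bd i) * b i)"
proof -
  obtain c where cK: "\<forall>i<N. c i \<in> K" and x: "x = (\<Sum>j<N. c j * b j)"
    using assms(1) unfolding is_K_basis_def by blast
  have "trace K (x * bd i) = c i" if i: "i < N" for i
  proof -
    have "trace K (x * bd i) = (\<Sum>j<N. c j * trace K (b j * bd i))"
      unfolding x sum_distrib_right trace_sum
      by (rule sum.cong) (simp_all add: cK trace_mult_left mult.assoc)
    also have "\<dots> = c i"
      using sum_mult_trace_dual(1)[OF assms(2) i] .
    finally show ?thesis .
  qed
  then show ?thesis using x by simp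
qed

lemma sum_basis_Gal_dual:
  assumes "finite_galois K" "is_K_basis K N b" "trace_dual K N b bd" "\<sigma> \<in> Gal K"
  shows "(\<Sum>i<N. b i * \<sigma> (bd i)) = (if \<sigma> = id then 1 else 0)"
proof -
  define d where "d \<sigma> = (\<Sum>i<N. b i * \<sigma> (bd i))" for \<sigma> :: "'a \<Rightarrow> 'a"
  have fin: "finite (Gal K)" using assms(1) by (simp add: finite_galois_def)
  have "(\<Sum>\<sigma>\<in>Gal K. d \<sigma> * \<sigma> x) = x" for x
  proof -
    have "(\<Sum>\<sigma>\<in>Gal K. d \<sigma> * \<sigma> x) = (\<Sum>\<sigma>\<in>Gal K. \<Sum>i<N. b i * \<sigma> (x * bd i))"
      unfolding d_def sum_distrib_right
      by (intro sum.cong refl) (auto simp: Gal_mult mult_ac)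
    also have "\<dots> = (\<Sum>i<N. b i * trace K (x * bd i))"
      unfolding trace_def sum_distrib_left by (rule sum.swap)
    also have "\<dots> = x"
      using trace_dual_expansion[OF assms(2,3), of x] by (simp add: mult.commute)
    finally show ?thesis .
  qed
  moreover have "(\<Sum>\<tau>\<in>Gal K. (d \<tau> - (if \<tau> = id then 1 else 0)) * \<tau> x)
      = (\<Sum>\<tau>\<in>Gal K. d \<tau> * \<tau> x) - (\<Sum>\<tau>\<in>Gal K. if \<tau> = id then x else 0)" for x
    unfolding sum_subtractf[symmetric] by (rule sum.cong) (auto simp: algebra_simps)
  ultimately have "(\<Sum>\<tau>\<in>Gal K. (d \<tau> - (if \<tau> = id then 1 else 0)) * \<tau> x) = 0" for x
    using fin id_in_Gal[of K] by simp
  then have "\<forall>\<tau>\<in>Gal K. d \<tau> - (if \<tau> = id then 1 else 0) = 0"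
    by (rule Gal_linear_independent[OF fin subset_refl])
  then show ?thesis using assms(4) by (simp add: d_def)
qed

lemma Gal_dual_basis_orthogonal:
  assumes "finite_galois K" "is_K_basis K N b" "trace_dual K N b bd"
    and g: "g \<in> Gal K" and h: "h \<in> Gal K"
  shows "(\<Sum>i<N. g (b i) * h (bd i)) = (if g = h then 1 else 0)"
proof -
  have "bij g" using Gal_bij[OF g] .
  then have g_inv: "\<And>x. g (inv g x) = x" and inv_g: "\<And>x. inv g (g x) = x"
    by (simp_all add: bij_is_surj surj_f_inv_f bij_is_inj inv_f_f)
  have "inv g \<circ> h = id \<longleftrightarrow> g = h"
    by (metis comp_apply comp_id g_inv inv_g ext)
  moreover have "(\<Sum>i<N. g (b i) * h (bd i)) = g (\<Sum>i<N. b i * (inv g \<circ> h) (bd i))"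
    by (simp add: Gal_sum[OF g] Gal_mult[OF g] g_inv)
  ultimately show ?thesis
    using sum_basis_Gal_dual[OF assms(1-3) Gal_comp[OF Gal_inv[OF g] h]]
    by (simp add: Gal_one[OF g] Gal_one[OF h] Gal_zero[OF g])
qed

lemma nth_ev: "i < N \<Longrightarrow> ev G N b a ! i = ga_act G a (b i)"
  by (simp add: ev_def)

lemma length_ev: "length (ev G N b a) = N"
  by (simp add: ev_def)

lemma ev_dot_ev_dual:
  assumes "finite_galois K" "is_K_basis K N b" "trace_dual K N b bd"
  shows "(\<Sum>i<N. ev (Gal K) N b a ! i * ev (Gal K) N bd c ! i) = ga_form (Gal K) a c"
proof -
  have fin: "finite (Gal K)" using assms(1) by (simp add: finite_galois_def)
  have "(\<Sum>i<N. ev (Gal K) N b a ! i * ev (Gal K) N bd c ! i)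
      = (\<Sum>g\<in>Gal K. \<Sum>h\<in>Gal K. a g * c h * (\<Sum>i<N. g (b i) * h (bd i)))"
  proof -
    have "(\<Sum>i<N. ev (Gal K) N b a ! i * ev (Gal K) N bd c ! i)
        = (\<Sum>i<N. \<Sum>g\<in>Gal K. \<Sum>h\<in>Gal K. a g * c h * (g (b i) * h (bd i)))"
      by (intro sum.cong refl) (simp add: nth_ev ga_act_def sum_product mult_ac)
    also have "\<dots> = (\<Sum>g\<in>Gal K. \<Sum>h\<in>Gal K. \<Sum>i<N. a g * c h * (g (b i) * h (bd i)))"
      by (subst sum.swap) (intro sum.cong refl sum.swap)
    finally show ?thesis by (simp add: sum_distrib_left)
  qed
  also have "\<dots> = (\<Sum>g\<in>Gal K. \<Sum>h\<in>Gal K. if g = h then a g * c h else 0)"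
    by (intro sum.cong refl) (simp add: Gal_dual_basis_orthogonal[OF assms])
  also have "\<dots> = ga_form (Gal K) a c"
    using fin by (simp add: ga_form_def)
  finally show ?thesis .
qed

definition ga_of_vec :: "('a \<Rightarrow> 'a) set \<Rightarrow> nat \<Rightarrow> (nat \<Rightarrow> 'a) \<Rightarrow> 'a list \<Rightarrow> (('a \<Rightarrow> 'a) \<Rightarrow> 'a::field)"
  where "ga_of_vec G N bd v h = (if h \<in> G then \<Sum>i<N. v ! i * h (bd i) else 0)"

lemma ga_of_vec_in_grp_alg: "ga_of_vec G N bd v \<in> grp_alg G"
  by (simp add: grp_alg_def ga_of_vec_def)

lemma ev_ga_of_vec:
  assumes "trace_dual K N b bd" and "length v = N"
  shows "ev (Gal K) N b (ga_of_vec (Gal K) N bd v) = v"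
proof (rule nth_equalityI)
  fix j assume "j < length (ev (Gal K) N b (ga_of_vec (Gal K) N bd v))"
  then have j: "j < N" by (simp add: length_ev)
  have "ev (Gal K) N b (ga_of_vec (Gal K) N bd v) ! j = (\<Sum>i<N. v ! i * trace K (b j * bd i))"
    using j unfolding trace_def sum_distrib_right sum_distrib_left
    by (simp add: nth_ev ga_act_def ga_of_vec_def, subst sum.swap)
       (intro sum.cong refl, simp add: Gal_mult sum_distrib_left mult_ac)
  also have "\<dots> = v ! j"
    using sum_mult_trace_dual(2)[OF assms(1) j] .
  finally show "ev (Gal K) N b (ga_of_vec (Gal K) N bd v) ! j = v ! j" .
qed (simp add: length_ev assms(2))

lemma ga_form_ga_of_vec:
  "ga_form G (ga_of_vec G N bd v) c = (\<Sum>i<N. v ! i * ev G N bd c ! i)"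
  by (simp add: ga_form_def ga_of_vec_def nth_ev ga_act_def sum_distrib_left
      sum_distrib_right mult_ac sum.swap[of _ G])

theorem mainTheorem10:
  fixes K :: "'a::field set" and N :: nat and b bd :: "nat \<Rightarrow> 'a"
    and C :: "(('a \<Rightarrow> 'a) \<Rightarrow> 'a) set"
  assumes "finite_galois K"
    and "abelian_gal K"
    and "ga_subspace (Gal K) C"
    and "is_K_basis K N b"
    and "trace_dual K N b bd"
  shows "ev (Gal K) N b ` ga_perp (Gal K) C = vec_perp N (ev (Gal K) N bd ` C)"
proof
  show "ev (Gal K) N b ` ga_perp (Gal K) C \<subseteq> vec_perp N (ev (Gal K) N bd ` C)"
    using ev_dot_ev_dual[OF assms(1,4,5)]
    by (auto simp: vec_perp_def ga_perp_def length_ev)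
next
  show "vec_perp N (ev (Gal K) N bd ` C) \<subseteq> ev (Gal K) N b ` ga_perp (Gal K) C"
  proof
    fix v assume v: "v \<in> vec_perp N (ev (Gal K) N bd ` C)"
    then have "ga_of_vec (Gal K) N bd v \<in> ga_perp (Gal K) C"
      by (simp add: ga_perp_def vec_perp_def ga_form_ga_of_vec ga_of_vec_in_grp_alg)
    moreover have "v = ev (Gal K) N b (ga_of_vec (Gal K) N bd v)"
      using v ev_ga_of_vec[OF assms(5)] by (simp add: vec_perp_def)
    ultimately show "v \<in> ev (Gal K) N b ` ga_perp (Gal K) C" by blast
  qed
qed

end
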